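(* Fix $\beta\ge1$ and let $\{X_i\}_{i\ge1}$, $W_n$, $\xi$, $\mathcal H$ and $\alpha$ be as in the context, with $\sup_{i\ge1}\mathbb E[|X_i|^{2+\alpha}]<\infty$. For $f\in\mathcal H$ and $k\ge1$ let $\xi_k:=f(W_k)-\mathbb E[f(W_k)]$. Then for every $f\in\mathcal H$ there exist positive constants $M_3,M_4$ such that for all $1\le j\le k$, $$\mathbb E[\xi_j\xi_k]\le M_3\Big(\frac jk\Big)^{1/2}+M_4\Big(\frac1k\Big)^{\alpha/2}.$$
   Context: Sub-linear expectation space $(\Omega,\mathscr H,\mathbb E)$: $(\Omega,\mathcal F)$ a measurable space, $\mathscr H$ a linear space of real measurable functions closed under $(X_1,\dots,X_n)\mapsto\varphi(X_1,\dots,X_n)$ for $\varphi\in C_{b,Lip}(\mathbb R^n)$ (bounded Lipschitz functions), and $\mathbb E:\mathscr H\to\mathbb R$ monotone, constant preserving, sub-additive and positively homogeneous; it is assumed $\mathbb E[X]=\sup_{P\in\mathcal P}E_P[X]$ for a family $\mathcal P$ of $\sigma$-additive probability measures. $(\widetilde\Omega,\widetilde{\mathscr H},\widetilde{\mathbb E})$ is another sub-linear expectation space. Both satisfy condition (A): for every $X$ and every sequence $f_n\in C_{b,Lip}(\mathbb R)$ with $f_n\downarrow0$, $\mathbb E[f_n(X)]\downarrow0$ (resp. $\widetilde{\mathbb E}[f_n(X)]\downarrow0$). Independence: $Y\in\mathscr H^n$ is independent of $X\in\mathscr H^m$ if $\mathbb E[\varphi(X,Y)]=\mathbb E\big[\mathbb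 E[\varphi(x,Y)]|_{x=X}\big]$ for all $\varphi\in C_{b,Lip}(\mathbb R^{m+n})$; $\{X_n\}$ is independent if $X_{n+1}$ is independent of $(X_1,\dots,X_n)$ for every $n$. Standing setting: $\{X_i\}$ is independent in $(\Omega,\mathscr H,\mathbb E)$ with $\mathbb E[X_i]=\mathbb E[-X_i]=0$, $\overline\sigma_i=\sqrt{\mathbb E[X_i^2]}$, $\underline\sigma_i=\sqrt{-\mathbb E[-X_i^2]}$, $\overline\sigma_i/\underline\sigma_i=\beta$ for all $i$, $0<\inf_i\underline\sigma_i^2\le\sup_i\overline\sigma_i^2<\infty$; $S_n=\sum_{i\le n}X_i$, $\sigma_i=(\underline\sigma_i+\overline\sigma_i)/2$, $B_n=\sqrt{\sum_{i\le n}\sigma_i^2}$, $W_n=S_n/B_n$. $\xi$ is $G$-normal under $\widetilde{\mathbb E}$ (for each $f\in C_{b,Lip}(\mathbb R)$, $u(t,x)=\widetilde{\mathbb E}[f(x+\sqrt t\xi)]$ is the unique viscosity solution of $\partial_tu-G(\partial_{xx}u)=0$, $u(0,\cdot)=f$, with $G(a)=\frac12\widetilde{\mathbb E}[a\xi^2]$), with $\sqrt{\widetilde{\mathbb E}[\xi^2]}=\frac{2\beta}{1+\beta}$, $\sqrt{-\widetilde{\mathbb E}[-\xi^2]}=\frac{2}{1+\beta}$. $\mathcal H:=\{f\in C_{b,Lip}(\mathbb R):\widetilde{\mathbb E}[f(\xi)]=-\widetilde{\mathbb E}[-f(\xi)]\}$. $\alpha\in(0,1)$ is the constant from Song's theorem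 (cited): there exist $\alpha\in(0,1)$ depending on $\beta$ and $C_{\alpha,\beta}>0$ such that for every such sequence and every $n$, $\sup_{|f|_{Lip}\le1}|\mathbb E[f(W_n)]-\widetilde{\mathbb E}[f(\xi)]|\le C_{\alpha,\beta}\sup_{1\le i\le n}\{\frac{\mathbb E[|X_i|^{2+\alpha}]}{\sigma_i^{2+\alpha}}(\frac{\sigma_i}{B_n})^\alpha\}$. *)

theory Defs
  imports "HOL-Probability.Probability"
begin

definition cbl1 :: "(real \<Rightarrow> real) \<Rightarrow> bool" where
  "cbl1 f \<longleftrightarrow> bounded (range f) \<and> (\<exists>L. L-lipschitz_on UNIV f)"

text \<open>C_{b,Lip}(R^n): a function of a vector x :: nat => real which is bounded and
  Lipschitz w.r.t. the Euclidean distance of the first n coordinates (so it only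
  depends on x 0, ..., x (n-1)).\<close>
definition cbl :: "nat \<Rightarrow> ((nat \<Rightarrow> real) \<Rightarrow> real) \<Rightarrow> bool" where
  "cbl n \<phi> \<longleftrightarrow> (\<exists>B. \<forall>x. \<bar>\<phi> x\<bar> \<le> B) \<and>
     (\<exists>L. \<forall>x y. \<bar>\<phi> x - \<phi> y\<bar> \<le> L * sqrt (\<Sum>i<n. (x i - y i)\<^sup>2))"

definition sublinear_expectation_space ::
  "'w measure \<Rightarrow> ('w \<Rightarrow> real) set \<Rightarrow> (('w \<Rightarrow> real) \<Rightarrow> real) \<Rightarrow> bool" where
  "sublinear_expectation_space M H E \<longleftrightarrow>
     space M = UNIV \<and>
     H \<subseteq> borel_measurable M \<and>
     (\<lambda>_. 0) \<in> H \<and>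
     (\<forall>X\<in>H. \<forall>Y\<in>H. (\<lambda>w. X w + Y w) \<in> H) \<and>
     (\<forall>X\<in>H. \<forall>c::real. (\<lambda>w. c * X w) \<in> H) \<and>
     (\<forall>n X \<phi>. (\<forall>i<n. X i \<in> H) \<and> cbl n \<phi> \<longrightarrow> (\<lambda>w. \<phi> (\<lambda>i. X i w)) \<in> H) \<and>
     (\<forall>X\<in>H. \<forall>Y\<in>H. (\<forall>w. X w \<le> Y w) \<longrightarrow> E X \<le> E Y) \<and>
     (\<forall>c. E (\<lambda>_. c) = c) \<and>
     (\<forall>X\<in>H. \<forall>Y\<in>H. E (\<lambda>w. X w + Y w) \<le> E X + E Y) \<and>
     (\<forall>X\<in>H. \<forall>c\<ge>0. E (\<lambda>w. c * X w) = c * E X) \<and>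
     (\<exists>\<P>. \<P> \<noteq> {} \<and>
        (\<forall>P\<in>\<P>. prob_space P \<and> space P = space M \<and> sets P = sets M) \<and>
        (\<forall>X\<in>H. (\<forall>P\<in>\<P>. integrable P X) \<and>
                bdd_above ((\<lambda>P. integral\<^sup>L P X) ` \<P>) \<and>
                E X = (SUP P\<in>\<P>. integral\<^sup>L P X)))"

definition condition_A :: "('w \<Rightarrow> real) set \<Rightarrow> (('w \<Rightarrow> real) \<Rightarrow> real) \<Rightarrow> bool" where
  "condition_A H E \<longleftrightarrow>
     (\<forall>X\<in>H. \<forall>f :: nat \<Rightarrow> real \<Rightarrow> real.
        (\<forall>n. cbl1 (f n)) \<and> (\<forall>n x. f (Suc n) x \<le> f n x) \<and> (\<forall>x. (\<lambda>n. f n x) \<longlonglongrightarrow> 0)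
        \<longrightarrow> (\<lambda>n. E (\<lambda>w. f n (X w))) \<longlonglongrightarrow> 0)"

text \<open>Independence of the sequence X 1, X 2, ...: X (n+1) is independent of
  (X 1, ..., X n) for every n \<ge> 1.  The vector argument of \<phi> has coordinate i
  equal to X (i+1).\<close>
definition indep_seq :: "(('w \<Rightarrow> real) \<Rightarrow> real) \<Rightarrow> (nat \<Rightarrow> 'w \<Rightarrow> real) \<Rightarrow> bool" where
  "indep_seq E X \<longleftrightarrow>
     (\<forall>n\<ge>1. \<forall>\<phi>. cbl (Suc n) \<phi> \<longrightarrow>
        E (\<lambda>w. \<phi> (\<lambda>i. X (Suc i) w)) =
        E (\<lambda>w. E (\<lambda>w'. \<phi> (\<lambda>i. if i < n then X (Suc i) w else X (Suc n) w'))))"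

definition C12_test ::
  "(real \<Rightarrow> real \<Rightarrow> real) \<Rightarrow> (real \<Rightarrow> real \<Rightarrow> real) \<Rightarrow> (real \<Rightarrow> real \<Rightarrow> real)
   \<Rightarrow> (real \<Rightarrow> real \<Rightarrow> real) \<Rightarrow> bool" where
  "C12_test \<phi> \<phi>t \<phi>x \<phi>xx \<longleftrightarrow>
     (\<forall>s y. ((\<lambda>s'. \<phi> s' y) has_real_derivative \<phi>t s y) (at s)) \<and>
     (\<forall>s y. ((\<lambda>y'. \<phi> s y') has_real_derivative \<phi>x s y) (at y)) \<and>
     (\<forall>s y. ((\<lambda>y'. \<phi>x s y') has_real_derivative \<phi>xx s y) (at y)) \<and>
     continuous_on UNIV (\<lambda>(s,y). \<phi>t s y) \<and>
     continuous_on UNIV (\<lambda>(s,y). \<phi>x s y) \<and>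
     continuous_on UNIV (\<lambda>(s,y). \<phi>xx s y)"

definition viscosity_solution ::
  "(real \<Rightarrow> real) \<Rightarrow> (real \<Rightarrow> real) \<Rightarrow> (real \<Rightarrow> real \<Rightarrow> real) \<Rightarrow> bool" where
  "viscosity_solution G f u \<longleftrightarrow>
     continuous_on ({0..} \<times> UNIV) (\<lambda>(t,x). u t x) \<and>
     (\<forall>x. u 0 x = f x) \<and>
     (\<forall>t x \<phi> \<phi>t \<phi>x \<phi>xx. t > 0 \<and> C12_test \<phi> \<phi>t \<phi>x \<phi>xx \<and> \<phi> t x = u t x \<and>
        (\<exists>r>0. \<forall>s y. \<bar>s - t\<bar> < r \<and> \<bar>y - x\<bar> < r \<longrightarrow> u s y \<le> \<phi> s y)
        \<longrightarrow> \<phi>t t x - G (\<phi>xx t x) \<le> 0) \<and>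
     (\<forall>t x \<phi> \<phi>t \<phi>x \<phi>xx. t > 0 \<and> C12_test \<phi> \<phi>t \<phi>x \<phi>xx \<and> \<phi> t x = u t x \<and>
        (\<exists>r>0. \<forall>s y. \<bar>s - t\<bar> < r \<and> \<bar>y - x\<bar> < r \<longrightarrow> \<phi> s y \<le> u s y)
        \<longrightarrow> \<phi>t t x - G (\<phi>xx t x) \<ge> 0)"

definition G_normal :: "(('v \<Rightarrow> real) \<Rightarrow> real) \<Rightarrow> ('v \<Rightarrow> real) \<Rightarrow> bool" where
  "G_normal E \<xi> \<longleftrightarrow>
     (\<forall>f. cbl1 f \<longrightarrow>
        viscosity_solution (\<lambda>a. E (\<lambda>w. a * (\<xi> w)\<^sup>2) / 2) f
          (\<lambda>t x. E (\<lambda>w. f (x + sqrt t * \<xi> w))))"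

definition sig_up :: "(('w \<Rightarrow> real) \<Rightarrow> real) \<Rightarrow> (nat \<Rightarrow> 'w \<Rightarrow> real) \<Rightarrow> nat \<Rightarrow> real" where
  "sig_up E X i = sqrt (E (\<lambda>w. (X i w)\<^sup>2))"

definition sig_lo :: "(('w \<Rightarrow> real) \<Rightarrow> real) \<Rightarrow> (nat \<Rightarrow> 'w \<Rightarrow> real) \<Rightarrow> nat \<Rightarrow> real" where
  "sig_lo E X i = sqrt (- E (\<lambda>w. - (X i w)\<^sup>2))"

definition sig :: "(('w \<Rightarrow> real) \<Rightarrow> real) \<Rightarrow> (nat \<Rightarrow> 'w \<Rightarrow> real) \<Rightarrow> nat \<Rightarrow> real" where
  "sig E X i = (sig_lo E X i + sig_up E X i) / 2"

definition Bn :: "(('w \<Rightarrow> real) \<Rightarrow> real) \<Rightarrow> (nat \<Rightarrow> 'w \<Rightarrow> real) \<Rightarrow> nat \<Rightarrow> real" where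
  "Bn E X n = sqrt (\<Sum>i=1..n. (sig E X i)\<^sup>2)"

definition Wn :: "(('w \<Rightarrow> real) \<Rightarrow> real) \<Rightarrow> (nat \<Rightarrow> 'w \<Rightarrow> real) \<Rightarrow> nat \<Rightarrow> 'w \<Rightarrow> real" where
  "Wn E X n = (\<lambda>w. (\<Sum>i=1..n. X i w) / Bn E X n)"

end

theory Submission
  imports Defs
begin

text \<open>Write S_n for the partial sums and ||f|| for sup |f|. Replacing f(W_k) by
  f((S_k - S_j) / B_k) costs at most E[min(L |S_j| / B_k, 2 ||f||)], and the new term depends
  only on X_{j+1}, ..., X_k; by independence its covariance with the centred f(W_j) is then at
  most 2 ||f|| times its one-sided centring errors. Song's normal approximation controls both
  error terms: the truncated moment of S_j / B_k is O(B_j / B_k) = O(sqrt(j / k)), and since f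
  has a mean under the G-normal law, E[f(W_k)] + E[-f(W_k)] is of the order of the Lyapunov
  ratio, O(k^(-alpha/2)).\<close>

locale sublinear_expectation =
  fixes M :: "'w measure" and H :: "('w \<Rightarrow> real) set" and E :: "('w \<Rightarrow> real) \<Rightarrow> real"
  assumes space: "sublinear_expectation_space M H E"
begin

lemma H_add: "X \<in> H \<Longrightarrow> Y \<in> H \<Longrightarrow> (\<lambda>w. X w + Y w) \<in> H"
  using space unfolding sublinear_expectation_space_def by (elim conjE) simp

lemma H_scale: "X \<in> H \<Longrightarrow> (\<lambda>w. c * X w) \<in> H"
  using space unfolding sublinear_expectation_space_def by (elim conjE) simp

lemma H_cbl:
  assumes "\<And>i. i < n \<Longrightarrow> X i \<in> H" and "cbl n \<phi>"
  shows "(\<lambda>w. \<phi> (\<lambda>i. X i w)) \<in> H"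
proof -
  have "\<forall>n X \<phi>. (\<forall>i<n. X i \<in> H) \<and> cbl n \<phi> \<longrightarrow> (\<lambda>w. \<phi> (\<lambda>i. X i w)) \<in> H"
    using space unfolding sublinear_expectation_space_def by (elim conjE) assumption
  with assms show ?thesis by blast
qed

lemma E_mono: "X \<in> H \<Longrightarrow> Y \<in> H \<Longrightarrow> (\<And>w. X w \<le> Y w) \<Longrightarrow> E X \<le> E Y"
  using space unfolding sublinear_expectation_space_def by (elim conjE) simp

lemma E_const [simp]: "E (\<lambda>_. c) = c"
  using space unfolding sublinear_expectation_space_def by (elim conjE) simp

lemma E_subadd: "X \<in> H \<Longrightarrow> Y \<in> H \<Longrightarrow> E (\<lambda>w. X w + Y w) \<le> E X + E Y"
  using space unfolding sublinear_expectation_space_def by (elim conjE) simp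

lemma E_pos_homogeneous: "X \<in> H \<Longrightarrow> 0 \<le> c \<Longrightarrow> E (\<lambda>w. c * X w) = c * E X"
  using space unfolding sublinear_expectation_space_def by (elim conjE) simp

lemma H_const: "(\<lambda>_. c) \<in> H"
proof -
  have "cbl 0 (\<lambda>_. c)" unfolding cbl_def by auto
  then show ?thesis using H_cbl[of 0 "\<lambda>_ _. 0"] by simp
qed

lemma H_neg: "X \<in> H \<Longrightarrow> (\<lambda>w. - X w) \<in> H"
  using H_scale[of X "-1"] by simp

lemma E_add_const: assumes "X \<in> H" shows "E (\<lambda>w. X w + c) = E X + c"
proof (rule antisym)
  show "E (\<lambda>w. X w + c) \<le> E X + c"
    using E_subadd[OF assms H_const] by simp
  have "E (\<lambda>w. (X w + c) + - c) \<le> E (\<lambda>w. X w + c) + - c"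
    using E_subadd[OF H_add[OF assms H_const[of c]] H_const[of "- c"]] by simp
  then show "E X + c \<le> E (\<lambda>w. X w + c)" by simp
qed

lemma E_neg_le: assumes "X \<in> H" shows "- E (\<lambda>w. - X w) \<le> E X"
  using E_subadd[OF assms H_neg[OF assms]] by simp

lemma E_le_add_of_abs_diff_le:
  assumes "X \<in> H" "Y \<in> H" "D \<in> H" and "\<And>w. \<bar>X w - Y w\<bar> \<le> D w"
  shows "E X \<le> E Y + E D"
proof -
  have "X w \<le> Y w + D w" for w
    using assms(4)[of w] by (simp add: abs_le_iff)
  then have "E X \<le> E (\<lambda>w. Y w + D w)"
    by (intro E_mono[OF assms(1) H_add[OF assms(2,3)]])
  also have "\<dots> \<le> E Y + E D" by (rule E_subadd[OF assms(2,3)])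
  finally show ?thesis .
qed

lemma E_shifted_centering_le:
  assumes "T \<in> H" "F \<in> H" "D \<in> H" and "\<And>w. \<bar>F w - T w\<bar> \<le> D w"
  shows "E (\<lambda>w. T w - E F) \<le> E D + (E (\<lambda>w. - F w) + E F)"
    and "E (\<lambda>w. - (T w - E F)) \<le> E D + (E (\<lambda>w. - F w) + E F)"
proof -
  have "E T \<le> E F + E D"
    using E_le_add_of_abs_diff_le[OF assms(1-3)] assms(4) by (simp add: abs_minus_commute)
  then show "E (\<lambda>w. T w - E F) \<le> E D + (E (\<lambda>w. - F w) + E F)"
    using E_add_const[OF assms(1), of "- E F"] E_neg_le[OF assms(2)] by simp
  have "E (\<lambda>w. - T w) \<le> E (\<lambda>w. - F w) + E D"
    using E_le_add_of_abs_diff_le[OF H_neg[OF assms(1)] H_neg[OF assms(2)] assms(3)] assms(4)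
    by (simp add: abs_minus_commute)
  then show "E (\<lambda>w. - (T w - E F)) \<le> E D + (E (\<lambda>w. - F w) + E F)"
    using E_add_const[OF H_neg[OF assms(1)], of "E F"] by simp
qed

lemma E_abs_diff_le:
  assumes "X \<in> H" "Y \<in> H" and "\<And>w. \<bar>X w - Y w\<bar> \<le> c"
  shows "\<bar>E X - E Y\<bar> \<le> c"
  using E_le_add_of_abs_diff_le[OF assms(1,2) H_const, of c]
    E_le_add_of_abs_diff_le[OF assms(2,1) H_const, of c] assms(3)
  by (simp add: abs_minus_commute)

lemma E_abs_le: "X \<in> H \<Longrightarrow> (\<And>w. \<bar>X w\<bar> \<le> c) \<Longrightarrow> \<bar>E X\<bar> \<le> c"
  using E_abs_diff_le[of X "\<lambda>_. 0" c] H_const[of 0] by simp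

lemma E_pos_neg_parts:
  assumes "P \<in> H" "Q \<in> H"
  shows "E (\<lambda>w. max a 0 * P w + max (- a) 0 * Q w) = max a 0 * E P + max (- a) 0 * E Q"
  using E_pos_homogeneous[OF assms(1), of a] E_pos_homogeneous[OF assms(2), of "- a"]
  by (cases "0 \<le> a") (simp_all add: max_def)

lemma sig_bounds:
  assumes "(\<lambda>w. (X i w)\<^sup>2) \<in> H" and "c \<le> (sig_lo E X i)\<^sup>2" and "(sig_up E X i)\<^sup>2 \<le> C"
  shows "sqrt c \<le> sig E X i" and "sig E X i \<le> sqrt C"
proof -
  have "E (\<lambda>w. - (X i w)\<^sup>2) \<le> E (\<lambda>_. 0)"
    by (rule E_mono[OF H_neg[OF assms(1)] H_const]) simp
  then have lo_nonneg: "0 \<le> sig_lo E X i" unfolding sig_lo_def by simp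
  have lo_le_up: "sig_lo E X i \<le> sig_up E X i"
    unfolding sig_lo_def sig_up_def using E_neg_le[OF assms(1)] by simp
  have "sqrt c \<le> sig_lo E X i"
    using real_sqrt_le_mono[OF assms(2)] lo_nonneg by simp
  then show "sqrt c \<le> sig E X i" unfolding sig_def using lo_le_up by simp
  have "sig_up E X i \<le> sqrt C"
    using real_sqrt_le_mono[OF assms(3)] lo_nonneg lo_le_up by simp
  then show "sig E X i \<le> sqrt C" unfolding sig_def using lo_le_up by simp
qed

end

section \<open>Bounded Lipschitz functions of finitely many coordinates\<close>

definition coord_dist :: "nat \<Rightarrow> (nat \<Rightarrow> real) \<Rightarrow> (nat \<Rightarrow> real) \<Rightarrow> real" where
  "coord_dist n x y = sqrt (\<Sum>i<n. (x i - y i)\<^sup>2)"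

lemma coord_dist_nonneg: "0 \<le> coord_dist n x y"
  unfolding coord_dist_def by (simp add: sum_nonneg)

lemma coord_dist_mono: "n \<le> m \<Longrightarrow> coord_dist n x y \<le> coord_dist m x y"
  unfolding coord_dist_def by (intro real_sqrt_le_mono sum_mono2) auto

lemma abs_coord_le_coord_dist: assumes "i < n" shows "\<bar>x i - y i\<bar> \<le> coord_dist n x y"
proof -
  have "\<bar>x i - y i\<bar> = sqrt ((x i - y i)\<^sup>2)" by simp
  also have "\<dots> \<le> coord_dist n x y"
    unfolding coord_dist_def by (intro real_sqrt_le_mono member_le_sum) (use assms in auto)
  finally show ?thesis .
qed

lemma abs_sum_diff_le_coord_dist:
  assumes "A \<subseteq> {..<n}"
  shows "\<bar>(\<Sum>i\<in>A. x i) - (\<Sum>i\<in>A. y i)\<bar> \<le> real n * coord_dist n x y"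
proof -
  have "\<bar>(\<Sum>i\<in>A. x i) - (\<Sum>i\<in>A. y i)\<bar> \<le> (\<Sum>i\<in>A. \<bar>x i - y i\<bar>)"
    unfolding sum_subtractf[symmetric] by (rule sum_abs)
  also have "\<dots> \<le> (\<Sum>i\<in>A. coord_dist n x y)"
    using assms by (intro sum_mono abs_coord_le_coord_dist) auto
  also have "\<dots> \<le> real n * coord_dist n x y"
    using card_mono[OF _ assms] coord_dist_nonneg by (simp add: mult_right_mono)
  finally show ?thesis .
qed

lemma cblI:
  "(\<And>x. \<bar>\<phi> x\<bar> \<le> B) \<Longrightarrow> (\<And>x y. \<bar>\<phi> x - \<phi> y\<bar> \<le> L * coord_dist n x y) \<Longrightarrow> cbl n \<phi>"
  unfolding cbl_def coord_dist_def by blast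

lemma cblE:
  assumes "cbl n \<phi>"
  obtains B L where "0 \<le> B" "0 \<le> L" "\<And>x. \<bar>\<phi> x\<bar> \<le> B"
    "\<And>x y. \<bar>\<phi> x - \<phi> y\<bar> \<le> L * coord_dist n x y"
proof -
  obtain B L where B: "\<And>x. \<bar>\<phi> x\<bar> \<le> B" and L: "\<And>x y. \<bar>\<phi> x - \<phi> y\<bar> \<le> L * coord_dist n x y"
    using assms unfolding cbl_def coord_dist_def by blast
  have "L * coord_dist n x y \<le> max L 0 * coord_dist n x y" for x y
    by (intro mult_right_mono coord_dist_nonneg) simp
  with L have "\<bar>\<phi> x - \<phi> y\<bar> \<le> max L 0 * coord_dist n x y" for x y
    by (meson order_trans)
  moreover have "0 \<le> B" using B[of undefined] by linarith
  ultimately show ?thesis using that[of B "max L 0"] B by simp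
qed

lemma cbl_mono: assumes "cbl n \<phi>" "n \<le> m" shows "cbl m \<phi>"
proof -
  obtain B L where B: "\<And>x. \<bar>\<phi> x\<bar> \<le> B" and "0 \<le> L"
    and L: "\<And>x y. \<bar>\<phi> x - \<phi> y\<bar> \<le> L * coord_dist n x y"
    using cblE[OF assms(1)] by metis
  have "L * coord_dist n x y \<le> L * coord_dist m x y" for x y
    using coord_dist_mono[OF assms(2)] \<open>0 \<le> L\<close> by (rule mult_left_mono)
  with L have "\<bar>\<phi> x - \<phi> y\<bar> \<le> L * coord_dist m x y" for x y
    by (meson order_trans)
  with B show ?thesis by (rule cblI)
qed

lemma cbl_eqI: assumes "cbl n \<phi>" "\<And>i. i < n \<Longrightarrow> x i = y i" shows "\<phi> x = \<phi> y"
proof -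
  obtain B L where "\<And>x y. \<bar>\<phi> x - \<phi> y\<bar> \<le> L * coord_dist n x y"
    using cblE[OF assms(1)] by metis
  moreover have "coord_dist n x y = 0" unfolding coord_dist_def using assms(2) by simp
  ultimately have "\<bar>\<phi> x - \<phi> y\<bar> \<le> 0" by (metis mult_zero_right)
  then show ?thesis by simp
qed

lemma cbl_comp_sum:
  assumes "A \<subseteq> {..<n}" and "\<And>t. \<bar>g t\<bar> \<le> B" and "0 \<le> L" and "\<And>s t. \<bar>g s - g t\<bar> \<le> L * \<bar>s - t\<bar>"
  shows "cbl n (\<lambda>v. g ((\<Sum>i\<in>A. v i) / c))"
proof (rule cblI[of _ B "L / \<bar>c\<bar> * real n"])
  fix x y :: "nat \<Rightarrow> real"
  have "\<bar>g ((\<Sum>i\<in>A. x i) / c) - g ((\<Sum>i\<in>A. y i) / c)\<bar>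
      \<le> L / \<bar>c\<bar> * \<bar>(\<Sum>i\<in>A. x i) - (\<Sum>i\<in>A. y i)\<bar>"
    using assms(4)[of "(\<Sum>i\<in>A. x i) / c" "(\<Sum>i\<in>A. y i) / c"]
    by (simp add: diff_divide_distrib[symmetric] abs_divide)
  also have "\<dots> \<le> L / \<bar>c\<bar> * (real n * coord_dist n x y)"
    using assms(1,3) by (intro mult_left_mono abs_sum_diff_le_coord_dist) auto
  finally show "\<bar>g ((\<Sum>i\<in>A. x i) / c) - g ((\<Sum>i\<in>A. y i) / c)\<bar> \<le> L / \<bar>c\<bar> * real n * coord_dist n x y"
    by (simp add: mult.assoc)
qed (rule assms(2))

lemma cbl_const: "cbl n (\<lambda>_. c)"
  by (rule cblI[of _ "\<bar>c\<bar>" 0]) auto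

lemma cbl_neg: assumes "cbl n \<phi>" shows "cbl n (\<lambda>v. - \<phi> v)"
proof -
  obtain B L where "\<And>x. \<bar>\<phi> x\<bar> \<le> B" "\<And>x y. \<bar>\<phi> x - \<phi> y\<bar> \<le> L * coord_dist n x y"
    using cblE[OF assms] by metis
  then show ?thesis by (intro cblI[of _ B L]) (simp_all add: abs_minus_commute)
qed

lemma cbl_pos_part: assumes "cbl n \<phi>" shows "cbl n (\<lambda>v. max (\<phi> v) 0)"
proof -
  obtain B L where B: "\<And>x. \<bar>\<phi> x\<bar> \<le> B" and L: "\<And>x y. \<bar>\<phi> x - \<phi> y\<bar> \<le> L * coord_dist n x y"
    using cblE[OF assms] by metis
  show ?thesis
  proof (rule cblI[of _ B L])
    show "\<bar>max (\<phi> x) 0\<bar> \<le> B" for x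
      using B[of x] by linarith
    have "\<bar>max (\<phi> x) 0 - max (\<phi> y) 0\<bar> \<le> \<bar>\<phi> x - \<phi> y\<bar>" for x y
      by linarith
    then show "\<bar>max (\<phi> x) 0 - max (\<phi> y) 0\<bar> \<le> L * coord_dist n x y" for x y
      using L order_trans by blast
  qed
qed

lemma cbl_add: assumes "cbl n \<phi>" "cbl n \<psi>" shows "cbl n (\<lambda>v. \<phi> v + \<psi> v)"
proof -
  obtain B L where B: "\<And>x. \<bar>\<phi> x\<bar> \<le> B" and L: "\<And>x y. \<bar>\<phi> x - \<phi> y\<bar> \<le> L * coord_dist n x y"
    using cblE[OF assms(1)] by metis
  obtain B' L' where B': "\<And>x. \<bar>\<psi> x\<bar> \<le> B'" and L': "\<And>x y. \<bar>\<psi> x - \<psi> y\<bar> \<le> L' * coord_dist n x y"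
    using cblE[OF assms(2)] by metis
  show ?thesis
  proof (rule cblI[of _ "B + B'" "L + L'"])
    show "\<bar>\<phi> x + \<psi> x\<bar> \<le> B + B'" for x
      using B[of x] B'[of x] by linarith
    show "\<bar>\<phi> x + \<psi> x - (\<phi> y + \<psi> y)\<bar> \<le> (L + L') * coord_dist n x y" for x y
      using L[of x y] L'[of x y] by (simp add: distrib_right abs_le_iff)
  qed
qed

lemma cbl_diff: "cbl n \<phi> \<Longrightarrow> cbl n \<psi> \<Longrightarrow> cbl n (\<lambda>v. \<phi> v - \<psi> v)"
  using cbl_add[OF _ cbl_neg] by simp

lemma cbl_mult: assumes "cbl n \<phi>" "cbl n \<psi>" shows "cbl n (\<lambda>v. \<phi> v * \<psi> v)"
proof -
  obtain B L where B: "0 \<le> B" "\<And>x. \<bar>\<phi> x\<bar> \<le> B" and L: "\<And>x y. \<bar>\<phi> x - \<phi> y\<bar> \<le> L * coord_dist n x y"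
    using cblE[OF assms(1)] by metis
  obtain B' L' where B': "0 \<le> B'" "\<And>x. \<bar>\<psi> x\<bar> \<le> B'" and L': "\<And>x y. \<bar>\<psi> x - \<psi> y\<bar> \<le> L' * coord_dist n x y"
    using cblE[OF assms(2)] by metis
  show ?thesis
  proof (rule cblI[of _ "B * B'" "B * L' + B' * L"])
    show "\<bar>\<phi> x * \<psi> x\<bar> \<le> B * B'" for x
      using B B' by (simp add: abs_mult mult_mono)
    fix x y
    have "\<phi> x * \<psi> x - \<phi> y * \<psi> y = \<phi> x * (\<psi> x - \<psi> y) + \<psi> y * (\<phi> x - \<phi> y)"
      by (simp add: algebra_simps)
    then have "\<bar>\<phi> x * \<psi> x - \<phi> y * \<psi> y\<bar> \<le> \<bar>\<phi> x\<bar> * \<bar>\<psi> x - \<psi> y\<bar> + \<bar>\<psi> y\<bar> * \<bar>\<phi> x - \<phi> y\<bar>"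
      by (metis abs_mult abs_triangle_ineq)
    also have "\<dots> \<le> B * (L' * coord_dist n x y) + B' * (L * coord_dist n x y)"
      using B B' L L' by (intro add_mono mult_mono) auto
    finally show "\<bar>\<phi> x * \<psi> x - \<phi> y * \<psi> y\<bar> \<le> (B * L' + B' * L) * coord_dist n x y"
      by (simp add: algebra_simps)
  qed
qed

lemma (in sublinear_expectation) H_comp:
  assumes "Y \<in> H" and "\<And>t. \<bar>g t\<bar> \<le> B" and "0 \<le> L" and "\<And>s t. \<bar>g s - g t\<bar> \<le> L * \<bar>s - t\<bar>"
  shows "(\<lambda>w. g (Y w)) \<in> H"
proof -
  have "cbl 1 (\<lambda>v. g ((\<Sum>i\<in>{..<1}. v i) / 1))"
    by (rule cbl_comp_sum[OF _ assms(2-4)]) simp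
  then show ?thesis using H_cbl[of 1 "\<lambda>_. Y"] assms(1) by simp
qed

section \<open>Integrating out coordinates of an independent sequence\<close>

definition depends_only_from :: "nat \<Rightarrow> ((nat \<Rightarrow> real) \<Rightarrow> real) \<Rightarrow> bool" where
  "depends_only_from m \<phi> \<longleftrightarrow> (\<forall>v v'. (\<forall>i\<ge>m. v i = v' i) \<longrightarrow> \<phi> v = \<phi> v')"

lemma cbl_depends_only_from_const:
  assumes "cbl m \<phi>" "depends_only_from m \<phi>"
  shows "\<phi> v = \<phi> v'"
proof -
  have "\<phi> v = \<phi> (\<lambda>i. if i < m then v i else v' i)" by (rule cbl_eqI[OF assms(1)]) simp
  also have "\<dots> = \<phi> v'" using assms(2) unfolding depends_only_from_def by simp
  finally show ?thesis .
qed

locale independent_sequence = sublinear_expectation M H E for M :: "'w measure" and H E +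
  fixes X :: "nat \<Rightarrow> 'w \<Rightarrow> real"
  assumes X_in_H: "\<And>i. 1 \<le> i \<Longrightarrow> X i \<in> H"
    and indep: "indep_seq E X"
begin

definition Xvec :: "'w \<Rightarrow> nat \<Rightarrow> real" where
  "Xvec w = (\<lambda>i. X (Suc i) w)"

lemma sum_Xvec: "(\<Sum>i<n. Xvec w i) = (\<Sum>i=1..n. X i w)"
  unfolding Xvec_def by (simp add: sum.atLeast1_atMost_eq)

lemma H_Xvec: "cbl n \<phi> \<Longrightarrow> (\<lambda>w. \<phi> (Xvec w)) \<in> H"
  unfolding Xvec_def by (rule H_cbl) (simp_all add: X_in_H)

lemma H_comp_partial_sum:
  assumes "\<And>t. \<bar>g t\<bar> \<le> B" "0 \<le> L" "\<And>s t. \<bar>g s - g t\<bar> \<le> L * \<bar>s - t\<bar>"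
  shows "(\<lambda>w. g ((\<Sum>i=1..n. X i w) / c)) \<in> H"
  using H_Xvec[OF cbl_comp_sum[OF _ assms, of "{..<n}" n c]] by (simp add: sum_Xvec)

text \<open>\<open>integrate_out n \<phi>\<close> is the conditional sublinear expectation of \<open>\<phi>\<close> given the
  coordinates below \<open>n\<close>: coordinate \<open>n\<close> is replaced by an independent copy of \<open>X (n + 1)\<close>
  (the later coordinates too, which is harmless for functions in \<open>cbl (Suc n)\<close>).
  \<open>integrate_out_from m d\<close> does this for the coordinates \<open>m + d - 1\<close> down to \<open>m\<close>.\<close>

definition integrate_out :: "nat \<Rightarrow> ((nat \<Rightarrow> real) \<Rightarrow> real) \<Rightarrow> (nat \<Rightarrow> real) \<Rightarrow> real" where
  "integrate_out n \<phi> v = E (\<lambda>w. \<phi> (\<lambda>i. if i < n then v i else X (Suc n) w))"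

primrec integrate_out_from :: "nat \<Rightarrow> nat \<Rightarrow> ((nat \<Rightarrow> real) \<Rightarrow> real) \<Rightarrow> (nat \<Rightarrow> real) \<Rightarrow> real" where
  "integrate_out_from m 0 \<phi> = \<phi>"
| "integrate_out_from m (Suc d) \<phi> = integrate_out m (integrate_out_from (Suc m) d \<phi>)"

lemma H_frozen:
  assumes "cbl (Suc n) \<phi>"
  shows "(\<lambda>w. \<phi> (\<lambda>i. if i < n then v i else X (Suc n) w)) \<in> H"
proof -
  define \<psi> where "\<psi> u = \<phi> (\<lambda>i. if i < n then v i else u n)" for u :: "nat \<Rightarrow> real"
  obtain B L where B: "\<And>x. \<bar>\<phi> x\<bar> \<le> B" and "0 \<le> L"
    and L: "\<And>x y. \<bar>\<phi> x - \<phi> y\<bar> \<le> L * coord_dist (Suc n) x y"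
    using cblE[OF assms] by metis
  have "cbl (Suc n) \<psi>"
  proof (rule cblI[of _ B L])
    show "\<bar>\<psi> x\<bar> \<le> B" for x unfolding \<psi>_def by (rule B)
    fix x y :: "nat \<Rightarrow> real"
    have "coord_dist (Suc n) (\<lambda>i. if i < n then v i else x n) (\<lambda>i. if i < n then v i else y n)
        = \<bar>x n - y n\<bar>"
      unfolding coord_dist_def by simp
    also have "\<dots> \<le> coord_dist (Suc n) x y" by (rule abs_coord_le_coord_dist) simp
    finally have "L * coord_dist (Suc n) (\<lambda>i. if i < n then v i else x n) (\<lambda>i. if i < n then v i else y n)
        \<le> L * coord_dist (Suc n) x y"
      using \<open>0 \<le> L\<close> by (rule mult_left_mono)
    then show "\<bar>\<psi> x - \<psi> y\<bar> \<le> L * coord_dist (Suc n) x y"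
      unfolding \<psi>_def using L order_trans by blast
  qed
  from H_Xvec[OF this] show ?thesis unfolding \<psi>_def Xvec_def by simp
qed

lemma cbl_integrate_out:
  assumes "cbl (Suc n) \<phi>"
  shows "cbl n (integrate_out n \<phi>)"
proof -
  obtain B L where B: "\<And>x. \<bar>\<phi> x\<bar> \<le> B" and L: "\<And>x y. \<bar>\<phi> x - \<phi> y\<bar> \<le> L * coord_dist (Suc n) x y"
    using cblE[OF assms] by metis
  show ?thesis
  proof (rule cblI[of _ B L])
    show "\<bar>integrate_out n \<phi> v\<bar> \<le> B" for v
      unfolding integrate_out_def by (rule E_abs_le[OF H_frozen[OF assms]]) (rule B)
    fix v v' :: "nat \<Rightarrow> real"
    have "coord_dist (Suc n) (\<lambda>i. if i < n then v i else z) (\<lambda>i. if i < n then v' i else z)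
        = coord_dist n v v'" for z
      unfolding coord_dist_def by simp
    then show "\<bar>integrate_out n \<phi> v - integrate_out n \<phi> v'\<bar> \<le> L * coord_dist n v v'"
      unfolding integrate_out_def using L by (intro E_abs_diff_le H_frozen[OF assms]) metis
  qed
qed

lemma cbl_integrate_out_from: "cbl (m + d) \<phi> \<Longrightarrow> cbl m (integrate_out_from m d \<phi>)"
  by (induction d arbitrary: m) (simp_all add: cbl_integrate_out)

lemma E_integrate_out_from:
  "1 \<le> m \<Longrightarrow> cbl (m + d) \<phi> \<Longrightarrow> E (\<lambda>w. \<phi> (Xvec w)) = E (\<lambda>w. integrate_out_from m d \<phi> (Xvec w))"
proof (induction d arbitrary: m)
  case (Suc d)
  then have "E (\<lambda>w. \<phi> (Xvec w)) = E (\<lambda>w. integrate_out_from (Suc m) d \<phi> (Xvec w))"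
    by simp
  also have "\<dots> = E (\<lambda>w. integrate_out m (integrate_out_from (Suc m) d \<phi>) (Xvec w))"
    using indep Suc.prems cbl_integrate_out_from[of "Suc m" d \<phi>]
    unfolding indep_seq_def integrate_out_def Xvec_def by simp
  finally show ?case by simp
qed simp

lemma depends_only_from_integrate_out_from:
  "depends_only_from j \<phi> \<Longrightarrow> j \<le> m \<Longrightarrow> depends_only_from j (integrate_out_from m d \<phi>)"
proof (induction d arbitrary: m)
  case (Suc d)
  then have IH: "depends_only_from j (integrate_out_from (Suc m) d \<phi>)" by simp
  show ?case
    unfolding depends_only_from_def integrate_out_from.simps integrate_out_def
  proof (intro allI impI arg_cong[where f = E] ext)
    fix v v' :: "nat \<Rightarrow> real" and w
    assume "\<forall>i\<ge>j. v i = v' i"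
    with IH Suc.prems(2) show "integrate_out_from (Suc m) d \<phi> (\<lambda>i. if i < m then v i else X (Suc m) w)
        = integrate_out_from (Suc m) d \<phi> (\<lambda>i. if i < m then v' i else X (Suc m) w)"
      unfolding depends_only_from_def by simp
  qed
qed simp

lemma integrate_out_from_tail:
  assumes "1 \<le> m" "cbl (m + d) \<phi>" "depends_only_from m \<phi>"
  shows "integrate_out_from m d \<phi> v = E (\<lambda>w. \<phi> (Xvec w))"
proof -
  have "integrate_out_from m d \<phi> (Xvec w) = integrate_out_from m d \<phi> v" for w
    using cbl_integrate_out_from[OF assms(2)] depends_only_from_integrate_out_from[OF assms(3)]
    by (intro cbl_depends_only_from_const) auto
  then show ?thesis
    unfolding E_integrate_out_from[OF assms(1,2)] by simp
qed

lemma integrate_out_pos_neg_parts: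
  assumes "cbl n g" "cbl (Suc n) P" "cbl (Suc n) Q"
  shows "integrate_out n (\<lambda>u. max (g u) 0 * P u + max (- g u) 0 * Q u) v
       = max (g v) 0 * integrate_out n P v + max (- g v) 0 * integrate_out n Q v"
proof -
  have "g (\<lambda>i. if i < n then v i else X (Suc n) w) = g v" for w
    by (rule cbl_eqI[OF assms(1)]) simp
  then show ?thesis
    unfolding integrate_out_def using E_pos_neg_parts[OF H_frozen[OF assms(2)] H_frozen[OF assms(3)]]
    by simp
qed

lemma integrate_out_from_pos_neg_parts:
  assumes "cbl m g" "cbl (m + d) P" "cbl (m + d) Q"
  shows "integrate_out_from m d (\<lambda>u. max (g u) 0 * P u + max (- g u) 0 * Q u) v
       = max (g v) 0 * integrate_out_from m d P v + max (- g v) 0 * integrate_out_from m d Q v"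
  using assms
proof (induction d arbitrary: m v)
  case (Suc d)
  have g: "cbl (Suc m) g" using Suc.prems(1) by (rule cbl_mono) simp
  have PQ: "cbl (Suc m + d) P" "cbl (Suc m + d) Q" using Suc.prems(2,3) by simp_all
  have "integrate_out_from (Suc m) d (\<lambda>u. max (g u) 0 * P u + max (- g u) 0 * Q u)
      = (\<lambda>u. max (g u) 0 * integrate_out_from (Suc m) d P u + max (- g u) 0 * integrate_out_from (Suc m) d Q u)"
    by (rule ext) (rule Suc.IH[OF g PQ])
  then show ?case
    using integrate_out_pos_neg_parts[OF Suc.prems(1) cbl_integrate_out_from[OF PQ(1)]
        cbl_integrate_out_from[OF PQ(2)]]
    by simp
qed simp

text \<open>The sublinear form of \<open>E[g h] = E[g E[h]]\<close>: as \<open>E\<close> is only positively homogeneous,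
  where \<open>g < 0\<close> the tail contributes \<open>-E[-h]\<close> rather than \<open>E[h]\<close>.\<close>

lemma E_head_tail_product:
  assumes "1 \<le> m" "m \<le> n" "cbl m g" "cbl n h" "depends_only_from m h"
  shows "E (\<lambda>w. g (Xvec w) * h (Xvec w))
       = E (\<lambda>w. max (g (Xvec w)) 0 * E (\<lambda>w. h (Xvec w)) + max (- g (Xvec w)) 0 * E (\<lambda>w. - h (Xvec w)))"
proof -
  define d where "d = n - m"
  have n: "n = m + d" unfolding d_def using assms(2) by simp
  have g: "cbl (m + d) g" using cbl_mono[OF assms(3)] by simp
  have h: "cbl (m + d) h" "cbl (m + d) (\<lambda>v. - h v)" using assms(4) cbl_neg n by auto
  have tail: "depends_only_from m (\<lambda>v. - h v)"
    using assms(5) unfolding depends_only_from_def by metis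
  have split: "(\<lambda>v. g v * h v) = (\<lambda>v. max (g v) 0 * h v + max (- g v) 0 * - h v)"
    by (auto simp: max_def)
  show ?thesis
    unfolding E_integrate_out_from[OF assms(1) cbl_mult[OF g h(1)]] split
      integrate_out_from_pos_neg_parts[OF assms(3) h]
      integrate_out_from_tail[OF assms(1) h(1) assms(5)] integrate_out_from_tail[OF assms(1) h(2) tail]
    ..
qed

lemma E_head_tail_product_le:
  assumes "1 \<le> m" "m \<le> n" "cbl m g" "cbl n h" "depends_only_from m h"
    and "\<And>v. \<bar>g v\<bar> \<le> c" "E (\<lambda>w. h (Xvec w)) \<le> e" "E (\<lambda>w. - h (Xvec w)) \<le> e" "0 \<le> e"
  shows "E (\<lambda>w. g (Xvec w) * h (Xvec w)) \<le> c * e"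
proof -
  have "max (g v) 0 * E (\<lambda>w. h (Xvec w)) + max (- g v) 0 * E (\<lambda>w. - h (Xvec w)) \<le> c * e" for v
  proof -
    have "max (g v) 0 * E (\<lambda>w. h (Xvec w)) + max (- g v) 0 * E (\<lambda>w. - h (Xvec w)) \<le> \<bar>g v\<bar> * e"
      using assms(7,8) by (cases "0 \<le> g v") (simp_all add: max_def mult_left_mono)
    also have "\<dots> \<le> c * e" using assms(6,9) by (rule mult_right_mono)
    finally show ?thesis .
  qed
  then have "E (\<lambda>w. max (g (Xvec w)) 0 * E (\<lambda>w. h (Xvec w)) + max (- g (Xvec w)) 0 * E (\<lambda>w. - h (Xvec w)))
      \<le> E (\<lambda>_. c * e)"
    using assms(3) cbl_mono[OF cbl_neg[OF assms(3)], of m]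
    by (intro E_mono H_Xvec[of m] H_const cbl_add cbl_mult cbl_pos_part cbl_const) simp_all
  then show ?thesis unfolding E_head_tail_product[OF assms(1-5)] by simp
qed

end

section \<open>Covariance of head and tail functionals\<close>

lemma bounded_lipschitz_diff_le:
  fixes f :: "real \<Rightarrow> real"
  assumes "\<And>x. \<bar>f x\<bar> \<le> B" "\<And>x y. \<bar>f x - f y\<bar> \<le> L * \<bar>x - y\<bar>"
  shows "\<bar>f x - f y\<bar> \<le> min (L * \<bar>x - y\<bar>) (2 * B)"
  using assms(1)[of x] assms(1)[of y] assms(2)[of x y] by linarith

lemma truncated_abs_lipschitz:
  fixes L s t :: real
  assumes "0 \<le> L"
  shows "\<bar>min (L * \<bar>s\<bar>) B - min (L * \<bar>t\<bar>) B\<bar> \<le> L * \<bar>s - t\<bar>"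
proof -
  have "\<bar>L * \<bar>s\<bar> - L * \<bar>t\<bar>\<bar> \<le> L * \<bar>s - t\<bar>"
    using assms by (simp add: abs_mult right_diff_distrib[symmetric] mult_left_mono)
  then show ?thesis by linarith
qed

context independent_sequence
begin

lemma E_mult_centered_near_tail_le:
  assumes "1 \<le> j" "j \<le> k" "cbl j G" "cbl k F" "cbl k T" "cbl k D" "depends_only_from j T"
    and G_bound: "\<And>v. \<bar>G v\<bar> \<le> c" and F_T_close: "\<And>v. \<bar>F v - T v\<bar> \<le> D v"
  shows "E (\<lambda>w. G (Xvec w) * (F (Xvec w) - E (\<lambda>w. F (Xvec w))))
    \<le> c * (2 * E (\<lambda>w. D (Xvec w)) + (E (\<lambda>w. - F (Xvec w)) + E (\<lambda>w. F (Xvec w))))"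
proof -
  define b where "b = E (\<lambda>w. F (Xvec w))"
  define \<delta> where "\<delta> = E (\<lambda>w. D (Xvec w))"
  define \<epsilon> where "\<epsilon> = E (\<lambda>w. - F (Xvec w)) + b"
  have HF: "(\<lambda>w. F (Xvec w)) \<in> H" and HT: "(\<lambda>w. T (Xvec w)) \<in> H" and HD: "(\<lambda>w. D (Xvec w)) \<in> H"
    using assms(4-6) by (auto intro: H_Xvec)
  have "0 \<le> c" using G_bound[of undefined] by linarith
  have "0 \<le> \<epsilon>" unfolding \<epsilon>_def b_def using E_neg_le[OF HF] by simp
  have "0 \<le> D v" for v
    using F_T_close[of v] abs_ge_zero[of "F v - T v"] by linarith
  then have "0 \<le> \<delta>"
    unfolding \<delta>_def using E_mono[OF H_const HD, of 0] by simp
  have "cbl k (\<lambda>v. T v - b)" using assms(5) cbl_diff cbl_const by blast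
  moreover have "depends_only_from j (\<lambda>v. T v - b)"
    using assms(7) unfolding depends_only_from_def by metis
  ultimately have head_tail: "E (\<lambda>w. G (Xvec w) * (T (Xvec w) - b)) \<le> c * (\<delta> + \<epsilon>)"
    using E_head_tail_product_le[OF assms(1-3), of "\<lambda>v. T v - b" c "\<delta> + \<epsilon>"]
      E_shifted_centering_le[OF HT HF HD] F_T_close G_bound \<open>0 \<le> \<delta>\<close> \<open>0 \<le> \<epsilon>\<close>
    unfolding b_def \<delta>_def \<epsilon>_def by simp
  have "G v * (F v - T v) \<le> c * D v" for v
  proof -
    have "G v * (F v - T v) \<le> \<bar>G v\<bar> * \<bar>F v - T v\<bar>"
      by (metis abs_ge_self abs_mult)
    also have "\<dots> \<le> c * D v"
      using G_bound F_T_close \<open>0 \<le> c\<close> by (intro mult_mono) simp_all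
    finally show ?thesis .
  qed
  then have "E (\<lambda>w. G (Xvec w) * (F (Xvec w) - T (Xvec w))) \<le> E (\<lambda>w. c * D (Xvec w))"
    using assms(3-5) cbl_mono[OF assms(3,2)]
    by (intro E_mono H_Xvec[of k] H_scale[OF HD] cbl_mult cbl_diff) simp_all
  also have "\<dots> = c * \<delta>"
    unfolding \<delta>_def using \<open>0 \<le> c\<close> by (rule E_pos_homogeneous[OF HD])
  finally have near: "E (\<lambda>w. G (Xvec w) * (F (Xvec w) - T (Xvec w))) \<le> c * \<delta>" .
  have "E (\<lambda>w. G (Xvec w) * (F (Xvec w) - b))
      = E (\<lambda>w. G (Xvec w) * (T (Xvec w) - b) + G (Xvec w) * (F (Xvec w) - T (Xvec w)))"
    by (simp add: algebra_simps)
  also have "\<dots> \<le> E (\<lambda>w. G (Xvec w) * (T (Xvec w) - b)) + E (\<lambda>w. G (Xvec w) * (F (Xvec w) - T (Xvec w)))"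
    using assms(3-5) cbl_mono[OF assms(3,2)]
    by (intro E_subadd H_Xvec[of k] cbl_mult cbl_diff cbl_const) simp_all
  finally show ?thesis
    using head_tail near unfolding b_def \<delta>_def \<epsilon>_def by (simp add: algebra_simps)
qed

lemma covariance_bound:
  fixes f :: "real \<Rightarrow> real"
  assumes f_bound: "\<And>x. \<bar>f x\<bar> \<le> B" and f_lip: "\<And>x y. \<bar>f x - f y\<bar> \<le> L * \<bar>x - y\<bar>" and "0 \<le> L"
    and "1 \<le> j" "j \<le> k" "0 < bk"
  shows "E (\<lambda>w. (f ((\<Sum>i=1..j. X i w) / bj) - E (\<lambda>w'. f ((\<Sum>i=1..j. X i w') / bj)))
              * (f ((\<Sum>i=1..k. X i w) / bk) - E (\<lambda>w'. f ((\<Sum>i=1..k. X i w') / bk))))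
    \<le> 4 * B * E (\<lambda>w. min (L * \<bar>(\<Sum>i=1..j. X i w) / bk\<bar>) (2 * B))
      + 2 * B * (E (\<lambda>w. - f ((\<Sum>i=1..k. X i w) / bk)) + E (\<lambda>w. f ((\<Sum>i=1..k. X i w) / bk)))"
proof -
  define a where "a = E (\<lambda>w. f ((\<Sum>i=1..j. X i w) / bj))"
  define G where "G v = f ((\<Sum>i<j. v i) / bj) - a" for v :: "nat \<Rightarrow> real"
  define F where "F v = f ((\<Sum>i<k. v i) / bk)" for v :: "nat \<Rightarrow> real"
  define T where "T v = f ((\<Sum>i\<in>{j..<k}. v i) / bk)" for v :: "nat \<Rightarrow> real"
  define D where "D v = min (L * \<bar>(\<Sum>i<j. v i) / bk\<bar>) (2 * B)" for v :: "nat \<Rightarrow> real"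
  have cbl_f: "cbl n (\<lambda>v. f ((\<Sum>i\<in>A. v i) / c))" if "A \<subseteq> {..<n}" for A n c
    using cbl_comp_sum[OF that f_bound \<open>0 \<le> L\<close> f_lip] .
  have "\<bar>min (L * \<bar>t\<bar>) (2 * B)\<bar> \<le> 2 * B" for t
    using f_bound[of 0] \<open>0 \<le> L\<close> by simp
  then have "cbl k (\<lambda>v. (\<lambda>t. min (L * \<bar>t\<bar>) (2 * B)) ((\<Sum>i\<in>{..<j}. v i) / bk))"
    using truncated_abs_lipschitz \<open>0 \<le> L\<close> \<open>j \<le> k\<close> by (intro cbl_comp_sum) auto
  then have cbl_D: "cbl k D" unfolding D_def by simp
  have cbl_GFT: "cbl j G" "cbl k F" "cbl k T"
    unfolding G_def F_def T_def by (intro cbl_diff cbl_f cbl_const; auto)+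
  have tail: "depends_only_from j T"
    unfolding depends_only_from_def T_def by simp
  have G_bound: "\<bar>G v\<bar> \<le> 2 * B" for v
  proof -
    have "\<bar>a\<bar> \<le> B"
      unfolding a_def by (rule E_abs_le[OF H_comp_partial_sum[OF f_bound \<open>0 \<le> L\<close> f_lip]]) (rule f_bound)
    then show ?thesis
      unfolding G_def using f_bound[of "(\<Sum>i<j. v i) / bj"] by linarith
  qed
  have F_T_close: "\<bar>F v - T v\<bar> \<le> D v" for v
  proof -
    have "(\<Sum>i<k. v i) = (\<Sum>i<j. v i) + (\<Sum>i\<in>{j..<k}. v i)"
      using \<open>j \<le> k\<close> by (metis atLeast0LessThan sum.atLeastLessThan_concat zero_le)
    then have "(\<Sum>i<k. v i) / bk - (\<Sum>i\<in>{j..<k}. v i) / bk = (\<Sum>i<j. v i) / bk"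
      by (simp add: add_divide_distrib)
    then show ?thesis
      unfolding F_def T_def D_def using bounded_lipschitz_diff_le[OF f_bound f_lip] by metis
  qed
  have "E (\<lambda>w. G (Xvec w) * (F (Xvec w) - E (\<lambda>w. F (Xvec w))))
      \<le> 2 * B * (2 * E (\<lambda>w. D (Xvec w)) + (E (\<lambda>w. - F (Xvec w)) + E (\<lambda>w. F (Xvec w))))"
    by (rule E_mult_centered_near_tail_le[OF \<open>1 \<le> j\<close> \<open>j \<le> k\<close> cbl_GFT cbl_D tail G_bound F_T_close])
  then show ?thesis
    unfolding G_def F_def D_def a_def sum_Xvec by (simp add: algebra_simps)
qed

end

section \<open>Normal approximation and the decay rate\<close>

lemma Bn_bounds:
  assumes sig: "\<And>i. 1 \<le> i \<Longrightarrow> s0 \<le> sig E X i \<and> sig E X i \<le> s1" and "0 \<le> s0"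
  shows "sqrt (real n) * s0 \<le> Bn E X n" and "Bn E X n \<le> sqrt (real n) * s1"
proof -
  have "(\<Sum>i=1..n. s0\<^sup>2) \<le> (\<Sum>i=1..n. (sig E X i)\<^sup>2)"
    using sig \<open>0 \<le> s0\<close> by (intro sum_mono power_mono) auto
  then have "sqrt (real n * s0\<^sup>2) \<le> Bn E X n"
    unfolding Bn_def by (intro real_sqrt_le_mono) simp
  then show "sqrt (real n) * s0 \<le> Bn E X n"
    using \<open>0 \<le> s0\<close> by (simp add: real_sqrt_mult)
  have "(\<Sum>i=1..n. (sig E X i)\<^sup>2) \<le> (\<Sum>i=1..n. s1\<^sup>2)"
    using sig \<open>0 \<le> s0\<close> by (intro sum_mono power_mono) (auto intro: order_trans)
  then have "Bn E X n \<le> sqrt (real n * s1\<^sup>2)"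
    unfolding Bn_def by (intro real_sqrt_le_mono) simp
  moreover have "0 \<le> s1" if "1 \<le> n" using sig[of 1] \<open>0 \<le> s0\<close> by linarith
  ultimately show "Bn E X n \<le> sqrt (real n) * s1"
    by (cases "n = 0") (simp_all add: real_sqrt_mult)
qed

definition lyapunov_ratio :: "(('w \<Rightarrow> real) \<Rightarrow> real) \<Rightarrow> (nat \<Rightarrow> 'w \<Rightarrow> real) \<Rightarrow> real \<Rightarrow> nat \<Rightarrow> real" where
  "lyapunov_ratio E X \<alpha> n = Max ((\<lambda>i. E (\<lambda>w. \<bar>X i w\<bar> powr (2 + \<alpha>)) / (sig E X i) powr (2 + \<alpha>)
                                  * (sig E X i / Bn E X n) powr \<alpha>) ` {1..n})"

lemma lyapunov_ratio_le:
  assumes sig: "\<And>i. 1 \<le> i \<Longrightarrow> s0 \<le> sig E X i \<and> sig E X i \<le> s1" and "0 < s0" "0 \<le> \<alpha>"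
    and moment: "\<And>i. 1 \<le> i \<Longrightarrow> E (\<lambda>w. \<bar>X i w\<bar> powr (2 + \<alpha>)) \<le> K" and "0 \<le> K" and "1 \<le> n"
  shows "lyapunov_ratio E X \<alpha> n \<le> K / s0 powr (2 + \<alpha>) * (s1 / s0) powr \<alpha> * (1 / real n) powr (\<alpha> / 2)"
proof -
  have "E (\<lambda>w. \<bar>X i w\<bar> powr (2 + \<alpha>)) / sig E X i powr (2 + \<alpha>) * (sig E X i / Bn E X n) powr \<alpha>
      \<le> K / s0 powr (2 + \<alpha>) * (s1 / s0) powr \<alpha> * (1 / real n) powr (\<alpha> / 2)" if i: "i \<in> {1..n}" for i
  proof -
    have s: "s0 \<le> sig E X i" "sig E X i \<le> s1" using sig i by auto
    have Bn: "sqrt (real n) * s0 \<le> Bn E X n" using Bn_bounds(1)[OF sig] \<open>0 < s0\<close> by simp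
    moreover have "0 < sqrt (real n) * s0" using \<open>0 < s0\<close> \<open>1 \<le> n\<close> by simp
    ultimately have "0 < Bn E X n" by linarith
    have moment_le: "E (\<lambda>w. \<bar>X i w\<bar> powr (2 + \<alpha>)) / sig E X i powr (2 + \<alpha>) \<le> K / s0 powr (2 + \<alpha>)"
      using moment i s \<open>0 < s0\<close> \<open>0 \<le> K\<close> \<open>0 \<le> \<alpha>\<close> by (intro frac_le powr_mono2) auto
    have "sig E X i / Bn E X n \<le> s1 / (s0 * sqrt (real n))"
      using s Bn \<open>0 < s0\<close> \<open>1 \<le> n\<close> by (intro frac_le) (auto simp: mult.commute)
    then have "(sig E X i / Bn E X n) powr \<alpha> \<le> (s1 / (s0 * sqrt (real n))) powr \<alpha>"
      using s \<open>0 < Bn E X n\<close> \<open>0 < s0\<close> \<open>0 \<le> \<alpha>\<close> by (intro powr_mono2) auto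
    also have "\<dots> = (s1 / s0) powr \<alpha> * (1 / real n) powr (\<alpha> / 2)"
      using s \<open>0 < s0\<close>
      by (simp add: powr_mult powr_divide powr_half_sqrt[symmetric] powr_powr real_sqrt_divide field_simps)
    finally have ratio_le: "(sig E X i / Bn E X n) powr \<alpha> \<le> (s1 / s0) powr \<alpha> * (1 / real n) powr (\<alpha> / 2)" .
    show ?thesis
      unfolding mult.assoc[of "K / s0 powr (2 + \<alpha>)"]
      using \<open>0 \<le> K\<close> by (intro mult_mono[OF moment_le ratio_le]) simp_all
  qed
  then show ?thesis
    unfolding lyapunov_ratio_def using \<open>1 \<le> n\<close> by (intro Max.boundedI) auto
qed

lemma cbl1E:
  assumes "cbl1 f"
  obtains B L where "0 \<le> B" "0 < L" "\<And>x. \<bar>f x\<bar> \<le> B" "\<And>x y. \<bar>f x - f y\<bar> \<le> L * \<bar>x - y\<bar>"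
proof -
  obtain L where L: "L-lipschitz_on UNIV f" and "bounded (range f)"
    using assms unfolding cbl1_def by blast
  then obtain B where B: "\<And>x. \<bar>f x\<bar> \<le> B" unfolding bounded_iff by auto
  have "\<bar>f x - f y\<bar> \<le> (max L 0 + 1) * \<bar>x - y\<bar>" for x y
  proof -
    have "\<bar>f x - f y\<bar> \<le> L * \<bar>x - y\<bar>" using lipschitz_onD[OF L] by (simp add: dist_real_def)
    also have "\<dots> \<le> (max L 0 + 1) * \<bar>x - y\<bar>" by (intro mult_right_mono) auto
    finally show ?thesis .
  qed
  moreover have "0 \<le> B" using B[of 0] by linarith
  ultimately show ?thesis using that[of B "max L 0 + 1"] B by simp
qed

lemma cbl1_lipschitzI:
  assumes "\<And>t. \<bar>g t\<bar> \<le> B" "\<And>s t. \<bar>g s - g t\<bar> \<le> L * \<bar>s - t\<bar>" "0 \<le> L"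
  shows "cbl1 g" and "L-lipschitz_on UNIV g"
proof -
  show "L-lipschitz_on UNIV g" using assms(2,3) by (intro lipschitz_onI) (simp_all add: dist_real_def)
  moreover have "bounded (range g)" unfolding bounded_iff using assms(1) by auto
  ultimately show "cbl1 g" unfolding cbl1_def by blast
qed

locale normal_approximation =
  S: independent_sequence M H E X + S': sublinear_expectation M' H' E'
  for M :: "'w measure" and H E X and M' :: "'v measure" and H' E' +
  fixes \<xi> :: "'v \<Rightarrow> real" and \<alpha> C s0 s1 K :: real
  assumes xi_in_H: "\<xi> \<in> H'" and xi_sq_in_H: "(\<lambda>v. (\<xi> v)\<^sup>2) \<in> H'"
    and alpha_pos: "0 < \<alpha>" and C_nonneg: "0 \<le> C"
    and song: "\<And>n g. 1 \<le> n \<Longrightarrow> cbl1 g \<Longrightarrow> 1-lipschitz_on UNIV g \<Longrightarrow>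
      \<bar>E (\<lambda>w. g (Wn E X n w)) - E' (\<lambda>v. g (\<xi> v))\<bar> \<le> C * lyapunov_ratio E X \<alpha> n"
    and s0_pos: "0 < s0" and sig_between: "\<And>i. 1 \<le> i \<Longrightarrow> s0 \<le> sig E X i \<and> sig E X i \<le> s1"
    and moment_le: "\<And>i. 1 \<le> i \<Longrightarrow> E (\<lambda>w. \<bar>X i w\<bar> powr (2 + \<alpha>)) \<le> K" and K_nonneg: "0 \<le> K"
begin

definition lyapunov_bound :: real where
  "lyapunov_bound = K / s0 powr (2 + \<alpha>) * (s1 / s0) powr \<alpha>"

lemma lyapunov_bound_nonneg: "0 \<le> lyapunov_bound"
  unfolding lyapunov_bound_def using K_nonneg by simp

lemma xi_second_moment_nonneg: "0 \<le> E' (\<lambda>v. (\<xi> v)\<^sup>2)"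
  using S'.E_mono[OF S'.H_const xi_sq_in_H, of 0] by simp

lemma lyapunov_ratio_decay:
  "1 \<le> n \<Longrightarrow> lyapunov_ratio E X \<alpha> n \<le> lyapunov_bound * (1 / real n) powr (\<alpha> / 2)"
  using lyapunov_ratio_le[OF sig_between s0_pos _ moment_le K_nonneg] alpha_pos
  unfolding lyapunov_bound_def by simp

lemma lyapunov_ratio_bounded:
  assumes "1 \<le> n"
  shows "lyapunov_ratio E X \<alpha> n \<le> lyapunov_bound"
proof -
  have "(1 / real n) powr (\<alpha> / 2) \<le> 1"
    using assms alpha_pos by (intro powr_le1) auto
  then show ?thesis
    using lyapunov_ratio_decay[OF assms] lyapunov_bound_nonneg by (meson mult_left_le order_trans)
qed

lemma Bn_pos:
  assumes "1 \<le> n"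
  shows "0 < Bn E X n"
proof -
  have "0 < sqrt (real n) * s0" using assms s0_pos by simp
  also have "\<dots> \<le> Bn E X n" using Bn_bounds(1)[OF sig_between] s0_pos by simp
  finally show ?thesis .
qed

lemma s0_le_s1: "s0 \<le> s1"
  using sig_between[of 1] by simp

lemma Bn_ratio_le:
  assumes "1 \<le> j" "j \<le> k"
  shows "Bn E X j / Bn E X k \<le> s1 / s0 * sqrt (real j / real k)"
proof -
  have "Bn E X j / Bn E X k \<le> (sqrt (real j) * s1) / (sqrt (real k) * s0)"
    using Bn_bounds[OF sig_between] s0_pos s0_le_s1 Bn_pos assms by (intro frac_le) auto
  also have "\<dots> = s1 / s0 * sqrt (real j / real k)"
    by (simp add: real_sqrt_divide mult.commute)
  finally show ?thesis .
qed

lemma song_lipschitz: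
  assumes "1 \<le> n" and g_bound: "\<And>t. \<bar>g t\<bar> \<le> B" and "0 < L"
    and g_lip: "\<And>s t. \<bar>g s - g t\<bar> \<le> L * \<bar>s - t\<bar>"
  shows "\<bar>E (\<lambda>w. g (Wn E X n w)) - E' (\<lambda>v. g (\<xi> v))\<bar> \<le> L * C * lyapunov_ratio E X \<alpha> n"
proof -
  define g1 where "g1 t = g t / L" for t
  have g1_bound: "\<bar>g1 t\<bar> \<le> B / L" for t
    unfolding g1_def using g_bound[of t] \<open>0 < L\<close> by (simp add: divide_right_mono)
  have g1_lip: "\<bar>g1 s - g1 t\<bar> \<le> 1 * \<bar>s - t\<bar>" for s t
    unfolding g1_def using g_lip[of s t] \<open>0 < L\<close> by (simp add: diff_divide_distrib[symmetric] field_simps)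
  have "(\<lambda>w. g1 (Wn E X n w)) \<in> H"
    unfolding Wn_def using S.H_comp_partial_sum[OF g1_bound _ g1_lip] by simp
  moreover have g: "g t = L * g1 t" for t
    unfolding g1_def using \<open>0 < L\<close> by simp
  ultimately have "E (\<lambda>w. g (Wn E X n w)) = L * E (\<lambda>w. g1 (Wn E X n w))"
    using S.E_pos_homogeneous \<open>0 < L\<close> by simp
  moreover have "E' (\<lambda>v. g (\<xi> v)) = L * E' (\<lambda>v. g1 (\<xi> v))"
    using S'.E_pos_homogeneous[OF S'.H_comp[OF xi_in_H g1_bound _ g1_lip]] g \<open>0 < L\<close> by simp
  moreover have "\<bar>E (\<lambda>w. g1 (Wn E X n w)) - E' (\<lambda>v. g1 (\<xi> v))\<bar> \<le> C * lyapunov_ratio E X \<alpha> n"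
    using song[OF \<open>1 \<le> n\<close> cbl1_lipschitzI[OF g1_bound g1_lip]] by simp
  ultimately show ?thesis
    using \<open>0 < L\<close> by (simp add: right_diff_distrib[symmetric] abs_mult mult.assoc mult_left_mono)
qed

lemma truncated_moment_le:
  assumes "1 \<le> n" "0 < \<rho>" "0 \<le> B"
  shows "E (\<lambda>w. min (\<rho> * \<bar>Wn E X n w\<bar>) B)
    \<le> \<rho> * ((E' (\<lambda>v. (\<xi> v)\<^sup>2) + 1) / 2 + C * lyapunov_ratio E X \<alpha> n)"
proof -
  define g where "g t = min (\<rho> * \<bar>t\<bar>) B" for t
  have g_bound: "\<bar>g t\<bar> \<le> B" for t
    unfolding g_def using assms by simp
  have g_lip: "\<bar>g s - g t\<bar> \<le> \<rho> * \<bar>s - t\<bar>" for s t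
    unfolding g_def using \<open>0 < \<rho>\<close> by (intro truncated_abs_lipschitz) simp
  have "g (\<xi> v) \<le> \<rho> / 2 * (\<xi> v)\<^sup>2 + \<rho> / 2" for v
  proof -
    have "\<bar>\<xi> v\<bar> \<le> ((\<xi> v)\<^sup>2 + 1) / 2"
      using sum_squares_bound[of "\<bar>\<xi> v\<bar>" 1] by (simp add: power2_eq_square)
    then have "\<rho> * \<bar>\<xi> v\<bar> \<le> \<rho> * (((\<xi> v)\<^sup>2 + 1) / 2)"
      using \<open>0 < \<rho>\<close> by (intro mult_left_mono) auto
    then show ?thesis unfolding g_def by (simp add: field_simps)
  qed
  then have "E' (\<lambda>v. g (\<xi> v)) \<le> E' (\<lambda>v. \<rho> / 2 * (\<xi> v)\<^sup>2 + \<rho> / 2)"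
    using \<open>0 < \<rho>\<close> by (intro S'.E_mono S'.H_comp[OF xi_in_H g_bound _ g_lip]
        S'.H_add[OF S'.H_scale[OF xi_sq_in_H] S'.H_const]) simp_all
  also have "\<dots> = E' (\<lambda>v. \<rho> / 2 * (\<xi> v)\<^sup>2) + \<rho> / 2"
    by (rule S'.E_add_const[OF S'.H_scale[OF xi_sq_in_H]])
  also have "\<dots> = \<rho> / 2 * E' (\<lambda>v. (\<xi> v)\<^sup>2) + \<rho> / 2"
    using \<open>0 < \<rho>\<close> by (subst S'.E_pos_homogeneous[OF xi_sq_in_H]) simp_all
  also have "\<dots> = \<rho> * ((E' (\<lambda>v. (\<xi> v)\<^sup>2) + 1) / 2)"
    by (simp add: field_simps)
  finally have "E' (\<lambda>v. g (\<xi> v)) \<le> \<rho> * ((E' (\<lambda>v. (\<xi> v)\<^sup>2) + 1) / 2)" .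
  moreover have "E (\<lambda>w. g (Wn E X n w)) - E' (\<lambda>v. g (\<xi> v)) \<le> \<rho> * C * lyapunov_ratio E X \<alpha> n"
    using song_lipschitz[OF \<open>1 \<le> n\<close> g_bound \<open>0 < \<rho>\<close> g_lip] by linarith
  ultimately show ?thesis
    unfolding g_def distrib_left mult.assoc by linarith
qed

lemma symmetric_defect_le:
  assumes "1 \<le> n" "\<And>t. \<bar>f t\<bar> \<le> B" "0 < L" "\<And>s t. \<bar>f s - f t\<bar> \<le> L * \<bar>s - t\<bar>"
    and "E' (\<lambda>v. f (\<xi> v)) = - E' (\<lambda>v. - f (\<xi> v))"
  shows "E (\<lambda>w. - f (Wn E X n w)) + E (\<lambda>w. f (Wn E X n w)) \<le> 2 * L * C * lyapunov_ratio E X \<alpha> n"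
proof -
  have "\<bar>- f s - - f t\<bar> \<le> L * \<bar>s - t\<bar>" "\<bar>- f t\<bar> \<le> B" for s t
    using assms(4)[of s t] assms(2)[of t] by simp_all
  then have "\<bar>E (\<lambda>w. - f (Wn E X n w)) - E' (\<lambda>v. - f (\<xi> v))\<bar> \<le> L * C * lyapunov_ratio E X \<alpha> n"
    by (intro song_lipschitz[OF assms(1) _ assms(3)])
  moreover have "\<bar>E (\<lambda>w. f (Wn E X n w)) - E' (\<lambda>v. f (\<xi> v))\<bar> \<le> L * C * lyapunov_ratio E X \<alpha> n"
    by (rule song_lipschitz[OF assms(1-4)])
  ultimately show ?thesis using assms(5) by linarith
qed

lemma truncated_increment_le:
  assumes "1 \<le> j" "j \<le> k" "0 < L" "0 \<le> B"
  shows "E (\<lambda>w. min (L * \<bar>(\<Sum>i=1..j. X i w) / Bn E X k\<bar>) (2 * B))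
    \<le> L * (s1 / s0 * sqrt (real j / real k))
        * ((E' (\<lambda>v. (\<xi> v)\<^sup>2) + 1) / 2 + C * lyapunov_bound)"
proof -
  define \<rho> where "\<rho> = L * (Bn E X j / Bn E X k)"
  have Bn_jk: "0 < Bn E X j" "0 < Bn E X k" using Bn_pos assms(1,2) by auto
  then have "0 < \<rho>" unfolding \<rho>_def using \<open>0 < L\<close> by simp
  have "L * \<bar>(\<Sum>i=1..j. X i w) / Bn E X k\<bar> = \<rho> * \<bar>Wn E X j w\<bar>" for w
    unfolding \<rho>_def Wn_def using Bn_jk by (simp add: abs_divide)
  then have "E (\<lambda>w. min (L * \<bar>(\<Sum>i=1..j. X i w) / Bn E X k\<bar>) (2 * B))
      \<le> \<rho> * ((E' (\<lambda>v. (\<xi> v)\<^sup>2) + 1) / 2 + C * lyapunov_ratio E X \<alpha> j)"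
    using truncated_moment_le[OF assms(1) \<open>0 < \<rho>\<close>, of "2 * B"] \<open>0 \<le> B\<close> by simp
  also have "\<dots> \<le> \<rho> * ((E' (\<lambda>v. (\<xi> v)\<^sup>2) + 1) / 2 + C * lyapunov_bound)"
    using lyapunov_ratio_bounded[OF assms(1)] \<open>0 < \<rho>\<close> C_nonneg
    by (intro mult_left_mono add_left_mono) simp_all
  also have "\<dots> \<le> L * (s1 / s0 * sqrt (real j / real k))
        * ((E' (\<lambda>v. (\<xi> v)\<^sup>2) + 1) / 2 + C * lyapunov_bound)"
  proof (rule mult_right_mono)
    show "\<rho> \<le> L * (s1 / s0 * sqrt (real j / real k))"
      unfolding \<rho>_def using \<open>0 < L\<close> by (intro mult_left_mono[OF Bn_ratio_le[OF assms(1,2)]]) simp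
    show "0 \<le> (E' (\<lambda>v. (\<xi> v)\<^sup>2) + 1) / 2 + C * lyapunov_bound"
      using xi_second_moment_nonneg C_nonneg lyapunov_bound_nonneg by simp
  qed
  finally show ?thesis .
qed

lemma covariance_le:
  assumes "1 \<le> j" "j \<le> k" and f_bound: "\<And>x. \<bar>f x\<bar> \<le> B" and "0 < L"
    and f_lip: "\<And>x y. \<bar>f x - f y\<bar> \<le> L * \<bar>x - y\<bar>"
    and f_symmetric: "E' (\<lambda>v. f (\<xi> v)) = - E' (\<lambda>v. - f (\<xi> v))"
  shows "E (\<lambda>w. (f (Wn E X j w) - E (\<lambda>w'. f (Wn E X j w')))
                 * (f (Wn E X k w) - E (\<lambda>w'. f (Wn E X k w'))))
    \<le> 4 * B * L * (s1 / s0) * ((E' (\<lambda>v. (\<xi> v)\<^sup>2) + 1) / 2 + C * lyapunov_bound) * sqrt (real j / real k)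
      + 4 * B * L * C * lyapunov_bound * (1 / real k) powr (\<alpha> / 2)"
proof -
  have "0 \<le> B" using f_bound[of 0] by linarith
  have "2 * L * C * lyapunov_ratio E X \<alpha> k \<le> 2 * L * C * (lyapunov_bound * (1 / real k) powr (\<alpha> / 2))"
    using lyapunov_ratio_decay assms(1,2) \<open>0 < L\<close> C_nonneg by (intro mult_left_mono) simp_all
  then have defect: "E (\<lambda>w. - f (Wn E X k w)) + E (\<lambda>w. f (Wn E X k w))
      \<le> 2 * L * C * (lyapunov_bound * (1 / real k) powr (\<alpha> / 2))"
    using symmetric_defect_le[OF _ f_bound \<open>0 < L\<close> f_lip f_symmetric, of k] assms(1,2) by linarith
  have "E (\<lambda>w. (f (Wn E X j w) - E (\<lambda>w'. f (Wn E X j w')))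
                 * (f (Wn E X k w) - E (\<lambda>w'. f (Wn E X k w'))))
      \<le> 4 * B * E (\<lambda>w. min (L * \<bar>(\<Sum>i=1..j. X i w) / Bn E X k\<bar>) (2 * B))
        + 2 * B * (E (\<lambda>w. - f (Wn E X k w)) + E (\<lambda>w. f (Wn E X k w)))"
    unfolding Wn_def
    by (rule S.covariance_bound[OF f_bound f_lip _ assms(1,2) Bn_pos]) (use \<open>0 < L\<close> assms in simp_all)
  also have "\<dots> \<le> 4 * B * (L * (s1 / s0 * sqrt (real j / real k))
          * ((E' (\<lambda>v. (\<xi> v)\<^sup>2) + 1) / 2 + C * lyapunov_bound))
        + 2 * B * (2 * L * C * (lyapunov_bound * (1 / real k) powr (\<alpha> / 2)))"
    using truncated_increment_le[OF assms(1,2) \<open>0 < L\<close> \<open>0 \<le> B\<close>] defect \<open>0 \<le> B\<close>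
    by (intro add_mono mult_left_mono) simp_all
  finally show ?thesis by (simp add: algebra_simps)
qed

lemma covariance_decay:
  assumes "cbl1 f" and f_symmetric: "E' (\<lambda>v. f (\<xi> v)) = - E' (\<lambda>v. - f (\<xi> v))"
  shows "\<exists>M3>0. \<exists>M4>0. \<forall>j k. 1 \<le> j \<and> j \<le> k \<longrightarrow>
           E (\<lambda>w. (f (Wn E X j w) - E (\<lambda>w'. f (Wn E X j w')))
                 * (f (Wn E X k w) - E (\<lambda>w'. f (Wn E X k w'))))
             \<le> M3 * sqrt (real j / real k) + M4 * (1 / real k) powr (\<alpha> / 2)"
proof -
  obtain B L where "0 \<le> B" "0 < L" and f_bound: "\<And>x. \<bar>f x\<bar> \<le> B"
    and f_lip: "\<And>x y. \<bar>f x - f y\<bar> \<le> L * \<bar>x - y\<bar>"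
    using cbl1E[OF assms(1)] by metis
  define M3 where "M3 = 4 * B * L * (s1 / s0) * ((E' (\<lambda>v. (\<xi> v)\<^sup>2) + 1) / 2 + C * lyapunov_bound)"
  define M4 where "M4 = 4 * B * L * C * lyapunov_bound"
  have "0 \<le> M3" "0 \<le> M4"
    unfolding M3_def M4_def using \<open>0 \<le> B\<close> \<open>0 < L\<close> s0_pos s0_le_s1 C_nonneg
      lyapunov_bound_nonneg xi_second_moment_nonneg
    by (intro mult_nonneg_nonneg add_nonneg_nonneg divide_nonneg_nonneg; simp)+
  have "E (\<lambda>w. (f (Wn E X j w) - E (\<lambda>w'. f (Wn E X j w')))
                 * (f (Wn E X k w) - E (\<lambda>w'. f (Wn E X k w'))))
      \<le> (M3 + 1) * sqrt (real j / real k) + (M4 + 1) * (1 / real k) powr (\<alpha> / 2)"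
    if "1 \<le> j" "j \<le> k" for j k
  proof -
    have "0 \<le> sqrt (real j / real k)" "0 \<le> (1 / real k) powr (\<alpha> / 2)" by simp_all
    with covariance_le[OF that f_bound \<open>0 < L\<close> f_lip f_symmetric] show ?thesis
      unfolding M3_def M4_def distrib_right by linarith
  qed
  moreover have "0 < M3 + 1" "0 < M4 + 1" using \<open>0 \<le> M3\<close> \<open>0 \<le> M4\<close> by simp_all
  ultimately show ?thesis by blast
qed

end

theorem lemma4p2:
  fixes M :: "'w measure" and H :: "('w \<Rightarrow> real) set" and E :: "('w \<Rightarrow> real) \<Rightarrow> real"
    and M' :: "'v measure" and H' :: "('v \<Rightarrow> real) set" and E' :: "('v \<Rightarrow> real) \<Rightarrow> real"
    and X :: "nat \<Rightarrow> 'w \<Rightarrow> real" and \<xi> :: "'v \<Rightarrow> real"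
    and \<beta> \<alpha> :: real and f :: "real \<Rightarrow> real"
  assumes space1: "sublinear_expectation_space M H E" and condA1: "condition_A H E"
    and space2: "sublinear_expectation_space M' H' E'" and condA2: "condition_A H' E'"
    and beta: "\<beta> \<ge> 1"
    and XH: "\<And>i. i \<ge> 1 \<Longrightarrow> X i \<in> H"
    and X2H: "\<And>i. i \<ge> 1 \<Longrightarrow> (\<lambda>w. (X i w)\<^sup>2) \<in> H"
    and indep: "indep_seq E X"
    and mean0: "\<And>i. i \<ge> 1 \<Longrightarrow> E (X i) = 0 \<and> E (\<lambda>w. - X i w) = 0"
    and ratio: "\<And>i. i \<ge> 1 \<Longrightarrow> sig_up E X i / sig_lo E X i = \<beta>"
    and var_lo: "\<exists>c>0. \<forall>i\<ge>1. c \<le> (sig_lo E X i)\<^sup>2"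
    and var_up: "\<exists>C. \<forall>i\<ge>1. (sig_up E X i)\<^sup>2 \<le> C"
    and xiH: "\<xi> \<in> H'" and xi2H: "(\<lambda>w. (\<xi> w)\<^sup>2) \<in> H'"
    and Gnormal: "G_normal E' \<xi>"
    and xi_up: "sqrt (E' (\<lambda>w. (\<xi> w)\<^sup>2)) = 2 * \<beta> / (1 + \<beta>)"
    and xi_lo: "sqrt (- E' (\<lambda>w. - (\<xi> w)\<^sup>2)) = 2 / (1 + \<beta>)"
    and alpha: "0 < \<alpha>" "\<alpha> < 1"
    and song: "\<exists>C>0. \<forall>n\<ge>1. \<forall>g. cbl1 g \<and> 1-lipschitz_on UNIV g \<longrightarrow>
        \<bar>E (\<lambda>w. g (Wn E X n w)) - E' (\<lambda>w. g (\<xi> w))\<bar>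
          \<le> C * Max ((\<lambda>i. E (\<lambda>w. \<bar>X i w\<bar> powr (2 + \<alpha>)) / (sig E X i) powr (2 + \<alpha>)
                          * (sig E X i / Bn E X n) powr \<alpha>) ` {1..n})"
    and XaH: "\<And>i. i \<ge> 1 \<Longrightarrow> (\<lambda>w. \<bar>X i w\<bar> powr (2 + \<alpha>)) \<in> H"
    and moment: "\<exists>K. \<forall>i\<ge>1. E (\<lambda>w. \<bar>X i w\<bar> powr (2 + \<alpha>)) \<le> K"
    and fH: "cbl1 f" and fsym: "E' (\<lambda>w. f (\<xi> w)) = - E' (\<lambda>w. - f (\<xi> w))"
  shows "\<exists>M3>0. \<exists>M4>0. \<forall>j k. 1 \<le> j \<and> j \<le> k \<longrightarrow>
           E (\<lambda>w. (f (Wn E X j w) - E (\<lambda>w'. f (Wn E X j w')))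
                 * (f (Wn E X k w) - E (\<lambda>w'. f (Wn E X k w'))))
             \<le> M3 * sqrt (real j / real k) + M4 * (1 / real k) powr (\<alpha> / 2)"
proof -
  \<comment> \<open>Condition (A), the \<open>G\<close>-normality of \<open>\<xi>\<close>, the values of \<open>\<beta>\<close> and of the variances of
    \<open>\<xi>\<close>, the zero means and \<open>\<alpha> < 1\<close> are needed only for Song's bound, which is assumed.\<close>
  interpret S: sublinear_expectation M H E by (rule sublinear_expectation.intro[OF space1])
  obtain c where "0 < c" and c: "\<And>i. 1 \<le> i \<Longrightarrow> c \<le> (sig_lo E X i)\<^sup>2" using var_lo by auto
  obtain Cu where Cu: "\<And>i. 1 \<le> i \<Longrightarrow> (sig_up E X i)\<^sup>2 \<le> Cu" using var_up by auto
  obtain K where K: "\<And>i. 1 \<le> i \<Longrightarrow> E (\<lambda>w. \<bar>X i w\<bar> powr (2 + \<alpha>)) \<le> K" using moment by auto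
  obtain Cs where "0 < Cs" and Cs: "\<And>n g. 1 \<le> n \<Longrightarrow> cbl1 g \<Longrightarrow> 1-lipschitz_on UNIV g \<Longrightarrow>
      \<bar>E (\<lambda>w. g (Wn E X n w)) - E' (\<lambda>w. g (\<xi> w))\<bar> \<le> Cs * lyapunov_ratio E X \<alpha> n"
    using song unfolding lyapunov_ratio_def by auto
  have "sqrt c \<le> sig E X i \<and> sig E X i \<le> sqrt Cu" if "1 \<le> i" for i
    using S.sig_bounds[OF X2H c Cu] that by simp
  then interpret normal_approximation M H E X M' H' E' \<xi> \<alpha> Cs "sqrt c" "sqrt Cu" "max K 0"
    using space1 space2 XH indep xiH xi2H alpha \<open>0 < Cs\<close> Cs \<open>0 < c\<close> K
    by unfold_locales (auto simp: le_max_iff_disj intro: sublinear_expectation.intro)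
  show ?thesis by (rule covariance_decay[OF fH fsym])
qed

end
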